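(* Let $X=\{x_1,\ldots,x_n\}\subset\mathbb{R}^d$ be a configuration of dimension $d$ (affine hull equal to $\mathbb{R}^d$), and suppose $\Delta_{d+2\,\ldots\, n}\neq 0$. Then a weight vector $(w_1,\ldots,w_n)$ belongs to $\mathbb{W}_0(X)$ if and only if \[(-1)^{i-d}\,w_i\,\Delta_{d+2\,\ldots\, n}=\sum_{l=d+2}^n w_l\,\Delta_{i\,d+2\,\ldots\,\widehat{l}\,\ldots\, n},\qquad i=1,\ldots,d+1,\] where $\widehat{l}$ indicates that the index $l$ is omitted from the list.
   Context: $\mathbb{W}_0(X)\subseteq\mathbb{R}^n$ is the space of weight vectors $(w_1,\ldots,w_n)$ with $\sum_j w_j=0$ and $\sum_j w_jx_j=0$ (equivalently $\sum_j w_j\overrightarrow{px_j}=\overrightarrow{O}$ for all $p$). For indices $j_1<\cdots<j_\beta$, $\Delta_{j_1\ldots j_\beta}$ denotes the oriented volume of the subconfiguration $X\setminus\{x_{j_1},\ldots,x_{j_\beta}\}$: when this subconfiguration has $d+1$ points, it is the determinant of its $(d+1)\times(d+1)$ augmented configuration matrix, whose columns are $\binom{1}{x_j}$ for the remaining points $x_j$ in increasing order of index (and the volume is zero whenever the subconfiguration is not a $d$-simplex). In the indices $i\,d+2\ldots\widehat{l}\ldots n$, the removed points are $x_i$ and all $x_k$ with $d+2\le k\le n$, $k\ne l$. *)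

theory Defs
  imports Complex_Main "Jordan_Normal_Form.Determinant"
begin

text \<open>A configuration X = {x_1,...,x_n} in R^d is given by x :: nat => nat => real,
  where point x_j (1 <= j <= n) has coordinates x j k for 0 <= k < d.\<close>

definition affine_spanning :: "nat \<Rightarrow> nat \<Rightarrow> (nat \<Rightarrow> nat \<Rightarrow> real) \<Rightarrow> bool" where
  "affine_spanning d n x \<longleftrightarrow>
     (\<forall>p :: nat \<Rightarrow> real. \<exists>c :: nat \<Rightarrow> real.
        (\<Sum>j=1..n. c j) = 1 \<and> (\<forall>k<d. p k = (\<Sum>j=1..n. c j * x j k)))"

definition W0 :: "nat \<Rightarrow> nat \<Rightarrow> (nat \<Rightarrow> nat \<Rightarrow> real) \<Rightarrow> (nat \<Rightarrow> real) set" where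
  "W0 d n x = {w. (\<Sum>j=1..n. w j) = 0 \<and> (\<forall>k<d. (\<Sum>j=1..n. w j * x j k) = 0)}"

definition aug_matrix :: "nat \<Rightarrow> (nat \<Rightarrow> nat \<Rightarrow> real) \<Rightarrow> nat list \<Rightarrow> real mat" where
  "aug_matrix d x js = mat (d+1) (length js)
     (\<lambda>(r, c). if r = 0 then 1 else x (js ! c) (r - 1))"

text \<open>Oriented volume Delta_R of the subconfiguration X minus {x_j | j in R}:
  determinant of its augmented matrix (remaining points in increasing order of index)
  if it has exactly d+1 points, and 0 otherwise.\<close>
definition Delta :: "nat \<Rightarrow> nat \<Rightarrow> (nat \<Rightarrow> nat \<Rightarrow> real) \<Rightarrow> nat set \<Rightarrow> real" where
  "Delta d n x R =
     (let js = sorted_list_of_set ({1..n} - R)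
      in if length js = d + 1 then det (aug_matrix d x js) else 0)"

end

theory Submission
  imports Defs
begin

(* Write v_j = (1, x_j) and let A be the matrix with columns v_1, ..., v_{d+1}, so that
   det A = Delta_{d+2...n} is nonzero. A weight vector w lies in W_0(X) iff sum_j w_j v_j = 0,
   i.e. iff A (w_1, ..., w_{d+1}) = b with b = - sum_{l >= d+2} w_l v_l. By Cramer's rule this
   holds iff w_i det A equals the determinant of A with column i replaced by b, for every i.
   That determinant is linear in b, and replacing column i of A by v_l and then moving this
   column to the end gives (-1)^(d+1-i) Delta_{i d+2 ... l^ ... n}. *)

lemma det_replace_col_adj_mat:
  assumes A: "A \<in> carrier_mat n n" and b: "b \<in> carrier_vec n" and k: "k < n"
  shows "det (replace_col A b k) = (adj_mat A *\<^sub>v b) $ k"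
proof -
  have Ab: "replace_col A b k \<in> carrier_mat n n" using A by (simp add: replace_col_def)
  have "(adj_mat A *\<^sub>v b) $ k = row (adj_mat A) k \<bullet> b" using adj_mat[OF A] k by simp
  also have "\<dots> = det (replace_col A b k)" unfolding scalar_prod_def using b k A
    by (subst laplace_expansion_column[OF Ab k], auto intro!: sum.cong arg_cong[of _ _ det]
      arg_cong[of _ _ "\<lambda> x. _ * x"]
      simp: replace_col_def adj_mat_def Matrix.row_def cofactor_def mat_delete_def ac_simps)
  finally show ?thesis ..
qed

lemma det_replace_col_sum:
  assumes A: "A \<in> carrier_mat n n" and v: "\<And>l. l \<in> L \<Longrightarrow> v l \<in> carrier_vec n" and k: "k < n"
  shows "det (replace_col A (vec n (\<lambda>r. \<Sum>l\<in>L. c l * v l $ r)) k)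
    = (\<Sum>l\<in>L. c l * det (replace_col A (v l) k))"
proof -
  have "det (replace_col A (vec n (\<lambda>r. \<Sum>l\<in>L. c l * v l $ r)) k)
      = (\<Sum>r<n. adj_mat A $$ (k, r) * (\<Sum>l\<in>L. c l * v l $ r))"
    using adj_mat(1)[OF A] A k
    by (simp add: det_replace_col_adj_mat scalar_prod_def lessThan_atLeast0)
  also have "\<dots> = (\<Sum>l\<in>L. c l * (\<Sum>r<n. adj_mat A $$ (k, r) * v l $ r))"
    by (simp add: sum_distrib_left sum.swap[of _ L] ac_simps)
  also have "\<dots> = (\<Sum>l\<in>L. c l * det (replace_col A (v l) k))"
  proof (rule sum.cong)
    fix l assume "l \<in> L"
    then show "c l * (\<Sum>r<n. adj_mat A $$ (k, r) * v l $ r) = c l * det (replace_col A (v l) k)"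
      using carrier_matD[OF adj_mat(1)[OF A]] A k v[of l]
      by (simp add: det_replace_col_adj_mat scalar_prod_def lessThan_atLeast0)
  qed simp
  finally show ?thesis .
qed

lemma cramer_rule_iff:
  fixes A :: "'a :: field mat"
  assumes A: "A \<in> carrier_mat n n" and det: "det A \<noteq> 0"
    and y: "y \<in> carrier_vec n" and b: "b \<in> carrier_vec n"
  shows "A *\<^sub>v y = b \<longleftrightarrow> (\<forall>k<n. det (replace_col A b k) = y $ k * det A)"
proof
  assume "A *\<^sub>v y = b"
  then show "\<forall>k<n. det (replace_col A b k) = y $ k * det A"
    using cramer_lemma_mat[OF A y] by blast
next
  assume cramer: "\<forall>k<n. det (replace_col A b k) = y $ k * det A"
  have "adj_mat A *\<^sub>v b = det A \<cdot>\<^sub>v y"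
  proof (rule eq_vecI)
    fix k assume "k < dim_vec (det A \<cdot>\<^sub>v y)"
    then have k: "k < n" using y by simp
    have "(adj_mat A *\<^sub>v b) $ k = det (replace_col A b k)"
      by (rule det_replace_col_adj_mat[OF A b k, symmetric])
    then show "(adj_mat A *\<^sub>v b) $ k = (det A \<cdot>\<^sub>v y) $ k"
      using cramer k y by (simp add: mult.commute)
  qed (use A y adj_mat(1)[OF A] in simp)
  then have "det A \<cdot>\<^sub>v (A *\<^sub>v y) = (A * adj_mat A) *\<^sub>v b"
    using A y b adj_mat(1)[OF A] by (simp add: mult_mat_vec)
  also have "\<dots> = det A \<cdot>\<^sub>v (1\<^sub>m n *\<^sub>v b)"
    using A b by (auto simp: adj_mat(2)[OF A])
  also have "\<dots> = det A \<cdot>\<^sub>v b"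
    using b by simp
  finally have scaled: "det A \<cdot>\<^sub>v (A *\<^sub>v y) = det A \<cdot>\<^sub>v b" .
  show "A *\<^sub>v y = b"
  proof (rule eq_vecI)
    fix i assume "i < dim_vec b"
    then have "det A * (A *\<^sub>v y) $ i = det A * b $ i"
      using arg_cong[OF scaled, of "\<lambda>v. v $ i"] A b by simp
    then show "(A *\<^sub>v y) $ i = b $ i" using det by simp
  qed (use A b in simp)
qed

lemma Ball_atLeast1_atMost_iff: "(\<forall>i\<in>{1..m}. P i) \<longleftrightarrow> (\<forall>k<m. P (Suc k))"
  unfolding image_Suc_lessThan[symmetric] by auto

lemma minus_one_powi_Suc_diff:
  assumes "k \<le> d"
  shows "(-1::real) powi (int (Suc k) - int d) = - ((-1) ^ (d - k))"
proof -
  have "int (Suc k) - int d = 1 - int (d - k)" using assms by simp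
  then have "(-1::real) powi (int (Suc k) - int d) = (-1) powi (1 - int (d - k))" by (simp only:)
  also have "\<dots> = - ((-1) ^ (d - k))"
    using power_int_diff[of "-1::real" 1 "int (d - k)"] by (cases "even (d - k)") simp_all
  finally show ?thesis .
qed

definition aug_vec :: "nat \<Rightarrow> (nat \<Rightarrow> nat \<Rightarrow> real) \<Rightarrow> nat \<Rightarrow> real vec" where
  "aug_vec d x j = vec (d+1) (\<lambda>r. if r = 0 then 1 else x j (r - 1))"

lemma dim_aug_vec [simp]: "dim_vec (aug_vec d x j) = d + 1"
  by (simp add: aug_vec_def)

lemma aug_matrix_dims [simp]:
  "dim_row (aug_matrix d x js) = d + 1" "dim_col (aug_matrix d x js) = length js"
  by (simp_all add: aug_matrix_def)

lemma aug_matrix_index: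
  "r < d+1 \<Longrightarrow> c < length js \<Longrightarrow> aug_matrix d x js $$ (r, c) = aug_vec d x (js ! c) $ r"
  by (simp add: aug_matrix_def aug_vec_def)

lemma replace_col_aug_matrix:
  "replace_col (aug_matrix d x js) (aug_vec d x l) k = aug_matrix d x (js[k := l])"
  by (intro eq_matI) (auto simp: replace_col_def aug_matrix_def aug_vec_def nth_list_update)

lemma det_aug_matrix_swap:
  assumes "length (xs @ a # b # ys) = d+1"
  shows "det (aug_matrix d x (xs @ b # a # ys)) = - det (aug_matrix d x (xs @ a # b # ys))"
proof -
  let ?M = "aug_matrix d x (xs @ a # b # ys)"
  let ?M' = "aug_matrix d x (xs @ b # a # ys)"
  have M: "?M \<in> carrier_mat (d+1) (d+1)" "?M' \<in> carrier_mat (d+1) (d+1)"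
    using assms by (simp_all add: carrier_matI)
  have "transpose_mat ?M' = swaprows (length xs) (Suc (length xs)) (transpose_mat ?M)"
    using assms
    by (intro eq_matI) (auto simp: mat_swaprows_def aug_matrix_def nth_append nth_Cons split: nat.splits)
  then have "det (transpose_mat ?M') = - det (transpose_mat ?M)"
    using M assms by (simp add: det_swaprows[of _ "d+1"])
  then show ?thesis using M by (simp add: det_transpose)
qed

lemma det_aug_matrix_move_last:
  assumes "length (xs @ l # ys) = d+1"
  shows "det (aug_matrix d x (xs @ l # ys)) = (-1) ^ length ys * det (aug_matrix d x (xs @ ys @ [l]))"
  using assms
proof (induction ys arbitrary: xs)
  case Nil
  then show ?case by simp
next
  case (Cons y ys)
  have "det (aug_matrix d x (xs @ l # y # ys)) = - det (aug_matrix d x ((xs @ [y]) @ l # ys))"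
    using det_aug_matrix_swap[of xs y l ys d x] Cons.prems by simp
  also have "det (aug_matrix d x ((xs @ [y]) @ l # ys))
      = (-1) ^ length ys * det (aug_matrix d x (xs @ (y # ys) @ [l]))"
    using Cons.IH[of "xs @ [y]"] Cons.prems by simp
  finally show ?case by simp
qed

lemma W0_iff_aug_vec_sum:
  "w \<in> W0 d n x \<longleftrightarrow> (\<forall>r<d+1. (\<Sum>j=1..n. w j * aug_vec d x j $ r) = 0)"
  by (auto simp: W0_def aug_vec_def less_Suc_eq_0_disj)

lemma Delta_nonzero_imp_le:
  assumes "Delta d n x {d+2..n} \<noteq> 0"
  shows "d + 1 \<le> n"
proof (rule ccontr)
  assume "\<not> d + 1 \<le> n"
  then have "{1..n} - {d+2..n} = {1..n}" by auto
  then show False using assms \<open>\<not> d + 1 \<le> n\<close> by (simp add: Delta_def)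
qed

lemma Delta_eq_det_aug_matrix:
  assumes "d + 1 \<le> n"
  shows "Delta d n x {d+2..n} = det (aug_matrix d x [1..<d+2])"
proof -
  have "{1..n} - {d+2..n} = {1..<d+2}" using assms by auto
  then show ?thesis by (simp add: Delta_def)
qed

lemma Delta_eq_det_replace_col:
  assumes k: "k \<le> d" and l: "l \<in> {d+2..n}"
  shows "Delta d n x ({Suc k} \<union> ({d+2..n} - {l}))
    = (-1) ^ (d - k) * det (replace_col (aug_matrix d x [1..<d+2]) (aug_vec d x l) k)"
proof -
  let ?xs = "[1..<Suc k]" and ?ys = "[k+2..<d+2]"
  have "{1..n} - ({Suc k} \<union> ({d+2..n} - {l})) = set (?xs @ ?ys @ [l])"
    using k l by auto
  moreover have "sorted (?xs @ ?ys @ [l])" "distinct (?xs @ ?ys @ [l])"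
    using k l by (auto simp: sorted_append simp del: upt_Suc)
  ultimately have "sorted_list_of_set ({1..n} - ({Suc k} \<union> ({d+2..n} - {l}))) = ?xs @ ?ys @ [l]"
    by (simp only: sorted_list_of_set.idem_if_sorted_distinct)
  then have "Delta d n x ({Suc k} \<union> ({d+2..n} - {l})) = det (aug_matrix d x (?xs @ ?ys @ [l]))"
    using k by (simp add: Delta_def del: upt_Suc)
  also have "\<dots> = (-1) ^ (d - k) * det (aug_matrix d x (?xs @ l # ?ys))"
    using det_aug_matrix_move_last[of ?xs l ?ys d x] k by (simp del: upt_Suc)
  also have "?xs @ l # ?ys = (?xs @ [Suc k..<d+2])[k := l]"
    using k by (simp add: list_update_append upt_conv_Cons del: upt_Suc)
  also have "?xs @ [Suc k..<d+2] = [1..<d+2]"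
    using upt_add_eq_append[of 1 "Suc k" "d + 1 - k"] k by (simp del: upt_Suc)
  finally show ?thesis by (simp add: replace_col_aug_matrix)
qed

lemma W0_iff_linear_system:
  fixes x :: "nat \<Rightarrow> nat \<Rightarrow> real" and w :: "nat \<Rightarrow> real"
  assumes "d + 1 \<le> n"
  defines "A \<equiv> aug_matrix d x [1..<d+2]" and "y \<equiv> vec (d+1) (\<lambda>k. w (Suc k))"
    and "b \<equiv> vec (d+1) (\<lambda>r. \<Sum>l=d+2..n. - w l * aug_vec d x l $ r)"
  shows "w \<in> W0 d n x \<longleftrightarrow> A *\<^sub>v y = b"
proof -
  have split: "(\<Sum>j=1..n. w j * aug_vec d x j $ r) = (A *\<^sub>v y) $ r - b $ r"
    if r: "r < d + 1" for r
  proof -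
    have "{1..n} = {Suc 0..Suc d} \<union> {d+2..n}" using assms by auto
    then have "(\<Sum>j=1..n. w j * aug_vec d x j $ r)
        = (\<Sum>j=Suc 0..Suc d. w j * aug_vec d x j $ r) + (\<Sum>l=d+2..n. w l * aug_vec d x l $ r)"
      by (simp add: sum.union_disjoint)
    also have "(\<Sum>j=Suc 0..Suc d. w j * aug_vec d x j $ r)
        = (\<Sum>k=0..d. w (Suc k) * aug_vec d x (Suc k) $ r)"
      by (rule sum.shift_bounds_cl_Suc_ivl)
    also have "\<dots> = (\<Sum>k\<in>{0..<d+1}. A $$ (r, k) * y $ k)"
      using r by (auto simp: A_def y_def aug_matrix_index atLeast0AtMost atLeast0LessThan
        lessThan_Suc_atMost simp del: upt_Suc intro!: sum.cong)
    also have "\<dots> = (A *\<^sub>v y) $ r"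
      using r by (simp add: A_def y_def scalar_prod_def del: upt_Suc sum.op_ivl_Suc)
    finally show ?thesis using r by (simp add: b_def sum_negf)
  qed
  have "dim_vec (A *\<^sub>v y) = d + 1" "dim_vec b = d + 1"
    by (simp_all add: A_def b_def)
  then show ?thesis
    unfolding W0_iff_aug_vec_sum vec_eq_iff using split by auto
qed

lemma Delta_equation_iff_cramer_equation:
  fixes x :: "nat \<Rightarrow> nat \<Rightarrow> real" and w :: "nat \<Rightarrow> real"
  assumes n: "d + 1 \<le> n" and k: "k \<le> d"
  defines "A \<equiv> aug_matrix d x [1..<d+2]"
    and "b \<equiv> vec (d+1) (\<lambda>r. \<Sum>l=d+2..n. - w l * aug_vec d x l $ r)"
  shows "(-1::real) powi (int (Suc k) - int d) * w (Suc k) * Delta d n x {d+2..n}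
      = (\<Sum>l=d+2..n. w l * Delta d n x ({Suc k} \<union> ({d+2..n} - {l})))
    \<longleftrightarrow> det (replace_col A b k) = w (Suc k) * det A"
proof -
  define s :: real where "s = (-1) ^ (d - k)"
  define D where "D l = det (replace_col A (aug_vec d x l) k)" for l
  have "s \<noteq> 0" by (simp add: s_def)
  have "det (replace_col A b k) = (\<Sum>l=d+2..n. - w l * D l)"
    unfolding b_def A_def D_def using k
    by (intro det_replace_col_sum carrier_matI carrier_vecI) (simp_all del: upt_Suc)
  then have cramer: "det (replace_col A b k) = - (\<Sum>l=d+2..n. w l * D l)"
    by (simp add: sum_negf)
  have "(\<Sum>l=d+2..n. w l * Delta d n x ({Suc k} \<union> ({d+2..n} - {l})))
      = (\<Sum>l=d+2..n. s * (w l * D l))"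
    using Delta_eq_det_replace_col[OF k] by (intro sum.cong) (simp_all add: s_def A_def D_def)
  also have "\<dots> = s * (\<Sum>l=d+2..n. w l * D l)"
    by (rule sum_distrib_left[symmetric])
  finally have paper_rhs: "(\<Sum>l=d+2..n. w l * Delta d n x ({Suc k} \<union> ({d+2..n} - {l})))
      = s * (\<Sum>l=d+2..n. w l * D l)" .
  have base: "Delta d n x {d+2..n} = det A"
    unfolding A_def by (rule Delta_eq_det_aug_matrix[OF n])
  have sign: "(-1::real) powi (int (Suc k) - int d) = - s"
    unfolding s_def by (rule minus_one_powi_Suc_diff[OF k])
  have cancel: "- s * a = s * c \<longleftrightarrow> - c = a" for a c :: real
    using \<open>s \<noteq> 0\<close> by (metis add.inverse_inverse minus_mult_commute mult_cancel_left)
  show ?thesis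
    unfolding sign base paper_rhs cramer mult.assoc cancel ..
qed

theorem theorem4p7:
  fixes d n :: nat and x :: "nat \<Rightarrow> nat \<Rightarrow> real" and w :: "nat \<Rightarrow> real"
  assumes "affine_spanning d n x"
    and "Delta d n x {d+2..n} \<noteq> 0"
  shows "w \<in> W0 d n x \<longleftrightarrow>
    (\<forall>i\<in>{1..d+1}.
       (-1::real) powi (int i - int d) * w i * Delta d n x {d+2..n} =
       (\<Sum>l=d+2..n. w l * Delta d n x ({i} \<union> ({d+2..n} - {l}))))"
proof -
  let ?P = "\<lambda>i. (-1::real) powi (int i - int d) * w i * Delta d n x {d+2..n}
    = (\<Sum>l=d+2..n. w l * Delta d n x ({i} \<union> ({d+2..n} - {l})))"
  have n: "d + 1 \<le> n" using assms(2) by (rule Delta_nonzero_imp_le)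
  define A where "A = aug_matrix d x [1..<d+2]"
  define y where "y = vec (d+1) (\<lambda>k. w (Suc k))"
  define b where "b = vec (d+1) (\<lambda>r. \<Sum>l=d+2..n. - w l * aug_vec d x l $ r)"
  have "det A \<noteq> 0" using assms(2) unfolding Delta_eq_det_aug_matrix[OF n] A_def .
  have "w \<in> W0 d n x \<longleftrightarrow> A *\<^sub>v y = b"
    unfolding A_def y_def b_def by (rule W0_iff_linear_system[OF n])
  also have "\<dots> \<longleftrightarrow> (\<forall>k<d+1. det (replace_col A b k) = y $ k * det A)"
    unfolding A_def y_def b_def
    by (intro cramer_rule_iff[OF _ \<open>det A \<noteq> 0\<close>[unfolded A_def]] carrier_matI carrier_vecI)
      (simp_all del: upt_Suc)
  also have "\<dots> \<longleftrightarrow> (\<forall>k<d+1. ?P (Suc k))"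
    using Delta_equation_iff_cramer_equation[OF n] by (simp add: A_def b_def y_def)
  also have "\<dots> \<longleftrightarrow> (\<forall>i\<in>{1..d+1}. ?P i)"
    by (rule Ball_atLeast1_atMost_iff[of "d+1" ?P, symmetric])
  finally show ?thesis .
qed

end
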